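(* Let $p=\sum_{i=0}^n c_ix^i$ be a polynomial with coefficients $c_i$ in the signed tropical hyperfield $\mathbb{T}\mathbb{R}$, and let $a=(+1,r)\in\mathbb{T}\mathbb{R}$ (with $r\in\mathbb{R}$) be a root of $p$. Then \[ \operatorname{mult}_a(p)=\Delta\big(\operatorname{In}^{(r)}(p)\big), \] where $\operatorname{In}^{(r)}(p)=\sum\{\operatorname{sign}(c_i)x^i : |c_i|+ir=C\}\in\mathbf{S}[x]$ with $C=\min_i(|c_i|+ir)$, and $\Delta$ denotes the number of sign changes in the sequence of coefficients, ignoring zeros.
   Context: The signed tropical hyperfield $\mathbb{T}\mathbb{R}$ has underlying set $(\{\pm1\}\times\mathbb{R})\cup\{\infty\}$. Multiplication: $(s,r)\cdot(s',r')=(ss',r+r')$, $\infty\cdot x=\infty$; the unit is $(+1,0)$ and the zero is $\infty$. For $x=(s,r)$ write $\operatorname{sign}(x)=s$, $|x|=r$, and $\operatorname{sign}(\infty)=0$, $|\infty|=\infty$; also $-(s,r)=(-s,r)$. Hyperaddition: $x\boxplus\infty=\{x\}$, and $(s,r)\boxplus(s',r')$ equals $\{(s,r)\}$ if $r<r'$, $\{(s',r')\}$ if $r'<r$, $\{(s,r)\}$ if $r=r'$ and $s=s'$, and $\{(\pm1,t):t\ge r\}\cup\{\infty\}$ if $r=r'$ and $s=-s'$; iterated sums are defined by $a_1\boxplus\cdots\boxplus a_n=\bigcup_{b\in a_1\boxplus\cdots\boxplus a_{n-1}} b\boxplus a_n$. The element $a$ is positive if its sign is $+1$. The sign hyperfield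 $\mathbf{S}=\{0,1,-1\}$ has the usual multiplication, $0\boxplus x=\{x\}$, $1\boxplus1=\{1\}$, $-1\boxplus-1=\{-1\}$, $1\boxplus-1=\{0,1,-1\}$. For a polynomial $p=\sum_{i=0}^n c_ix^i$ over a hyperfield $H$ and $a\in H$: $a$ is a root of $p$ (written $0\in p(a)$) if $0\in\boxplus_{i=0}^n c_ia^i$. Write $p\in(x-a)q$ for $q=\sum_{i=0}^{n-1}d_ix^i$ if $c_0=-ad_0$, $c_i\in(-ad_i)\boxplus d_{i-1}$ for $1\le i\le n-1$, and $c_n=d_{n-1}$. The multiplicity is defined recursively: $\operatorname{mult}_a(p)=0$ if $0\notin p(a)$, and $\operatorname{mult}_a(p)=1+\max\{\operatorname{mult}_a(q):p\in(x-a)q\}$ if $0\in p(a)$. *)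

theory Defs
  imports Main "HOL.Real"
begin

text \<open>TInf is the zero element infinity; TR s r is the element (s, r), where the
  boolean s encodes the sign: True = +1, False = -1.\<close>
datatype tr = TInf | TR bool real

definition tone :: tr where "tone = TR True 0"

fun tmul :: "tr \<Rightarrow> tr \<Rightarrow> tr" where
  "tmul TInf _ = TInf"
| "tmul _ TInf = TInf"
| "tmul (TR s r) (TR s' r') = TR (s = s') (r + r')"

fun tneg :: "tr \<Rightarrow> tr" where
  "tneg TInf = TInf"
| "tneg (TR s r) = TR (\<not> s) r"

fun tsign :: "tr \<Rightarrow> int" where
  "tsign TInf = 0"
| "tsign (TR s r) = (if s then 1 else -1)"

fun hadd :: "tr \<Rightarrow> tr \<Rightarrow> tr set" where
  "hadd x TInf = {x}"
| "hadd TInf y = {y}"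
| "hadd (TR s r) (TR s' r') =
     (if r < r' then {TR s r}
      else if r' < r then {TR s' r'}
      else if s = s' then {TR s r}
      else {TR b t | b t. t \<ge> r} \<union> {TInf})"

text \<open>Iterated hypersum a_1 \<boxplus> ... \<boxplus> a_n, left-associated as in the paper
  (the empty sum is {TInf}, and TInf \<boxplus> a_1 = {a_1}).\<close>
definition hsum :: "tr list \<Rightarrow> tr set" where
  "hsum xs = foldl (\<lambda>S x. \<Union>b\<in>S. hadd b x) {TInf} xs"

definition tpow :: "tr \<Rightarrow> nat \<Rightarrow> tr" where
  "tpow a i = (tmul a ^^ i) tone"

definition peval :: "tr list \<Rightarrow> tr \<Rightarrow> tr set" where
  "peval cs a = hsum (map (\<lambda>i. tmul (cs ! i) (tpow a i)) [0..<length cs])"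

definition is_root :: "tr list \<Rightarrow> tr \<Rightarrow> bool" where
  "is_root cs a \<longleftrightarrow> TInf \<in> peval cs a"

text \<open>p \<in> (x - a) q, for p = cs (degree n) and q = ds (length n)\<close>
definition in_lin_mult :: "tr list \<Rightarrow> tr \<Rightarrow> tr list \<Rightarrow> bool" where
  "in_lin_mult cs a ds \<longleftrightarrow>
     (let n = length ds in
        n \<ge> 1 \<and> length cs = n + 1 \<and>
        cs ! 0 = tneg (tmul a (ds ! 0)) \<and>
        (\<forall>i. 1 \<le> i \<and> i \<le> n - 1 \<longrightarrow> cs ! i \<in> hadd (tneg (tmul a (ds ! i))) (ds ! (i - 1))) \<and>
        cs ! n = ds ! (n - 1))"

text \<open>Multiplicity, defined by recursion on a fuel parameter equal to the length
  of the coefficient list (each division step decreases the length by one).\<close>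
fun mult_aux :: "nat \<Rightarrow> tr \<Rightarrow> tr list \<Rightarrow> nat" where
  "mult_aux 0 a cs = 0"
| "mult_aux (Suc k) a cs =
     (if \<not> is_root cs a then 0
      else Suc (Max (mult_aux k a ` {ds. in_lin_mult cs a ds})))"

definition mult :: "tr \<Rightarrow> tr list \<Rightarrow> nat" where
  "mult a cs = mult_aux (length cs) a cs"

text \<open>valuation of the i-th term at r: |c_i| + i r (None encodes infinity)\<close>
definition term_val :: "tr list \<Rightarrow> real \<Rightarrow> nat \<Rightarrow> real option" where
  "term_val cs r i = (case cs ! i of TInf \<Rightarrow> None | TR s m \<Rightarrow> Some (m + real i * r))"

text \<open>C = min_i (|c_i| + i r), over the finite terms (the leading coefficient is
  assumed nonzero in the theorem, so this set is nonempty).\<close>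
definition min_val :: "tr list \<Rightarrow> real \<Rightarrow> real" where
  "min_val cs r = Min {v. \<exists>i<length cs. term_val cs r i = Some v}"

text \<open>In^(r)(p), as a coefficient list in the sign hyperfield S = {0,1,-1}\<close>
definition initial_form :: "real \<Rightarrow> tr list \<Rightarrow> int list" where
  "initial_form r cs =
     map (\<lambda>i. if term_val cs r i = Some (min_val cs r) then tsign (cs ! i) else 0)
         [0..<length cs]"

fun sign_changes_nz :: "int list \<Rightarrow> nat" where
  "sign_changes_nz (x # y # zs) = (if x \<noteq> y then 1 else 0) + sign_changes_nz (y # zs)"
| "sign_changes_nz _ = 0"

definition sign_changes :: "int list \<Rightarrow> nat" where
  "sign_changes xs = sign_changes_nz (filter (\<lambda>x. x \<noteq> 0) xs)"

end

theory Submission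
  imports Defs "HOL-Library.Extended_Real"
begin

text \<open>Write a = (+1, r), let t_i = c_i a^i be the terms of p at a and C their least absolute
  value. On elements of absolute value at least C, the sign at level C (the sign if the absolute
  value is exactly C, and 0 otherwise) turns hyperaddition in TR into hyperaddition in the sign
  hyperfield S. Hence a is a root iff both signs occur in In(p) = In^(r)(p), and p \<in> (x - a) q
  forces In(p) \<in> (x - 1) In(q) over S, so that Descartes' rule over S gives
  \<Delta>(In(q)) + 1 \<le> \<Delta>(In(p)) for every quotient q. Conversely, let h be the last index at which
  In(p) has the sign opposite to its last nonzero sign: dividing upwards from the constant term
  below h and downwards from the leading term from h on yields a quotient with
  \<Delta>(In(q)) + 1 = \<Delta>(In(p)). Induction on the degree then identifies the multiplicity with
  \<Delta>(In(p)).\<close>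

section \<open>Sign changes and the sign hyperfield\<close>

definition shadd :: "int \<Rightarrow> int \<Rightarrow> int set" where
  "shadd x y = (if x = 0 then {y} else if y = 0 then {x} else if x = y then {x} else {-1, 0, 1})"

definition last_nonzero :: "int list \<Rightarrow> int" where
  "last_nonzero xs = last (0 # filter (\<lambda>x. x \<noteq> 0) xs)"

lemma last_nonzero_Nil [simp]: "last_nonzero [] = 0"
  by (simp add: last_nonzero_def)

lemma last_nonzero_single [simp]: "last_nonzero [x] = x"
  by (simp add: last_nonzero_def)

lemma last_nonzero_snoc [simp]:
  "last_nonzero (xs @ [x]) = (if x = 0 then last_nonzero xs else x)"
  by (simp add: last_nonzero_def)

lemma last_nonzero_in: "last_nonzero xs \<in> insert 0 (set xs)"
  by (induction xs rule: rev_induct) auto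

lemma last_nonzero_uminus [simp]: "last_nonzero (map uminus xs) = - last_nonzero xs"
  by (induction xs rule: rev_induct) auto

lemma last_nonzero_one_sided:
  assumes "set xs \<subseteq> {0, s}" and "s \<in> set xs" and "s \<noteq> 0"
  shows "last_nonzero xs = s"
  using assms by (induction xs rule: rev_induct) auto

lemma sign_changes_single [simp]: "sign_changes [x] = 0"
  by (simp add: sign_changes_def)

lemma sign_changes_zero_Cons [simp]: "sign_changes (0 # xs) = sign_changes xs"
  by (simp add: sign_changes_def)

lemma sign_changes_Cons_Cons [simp]:
  "sign_changes (s # x # xs) =
     (if x = 0 then sign_changes (s # xs) else (if s \<noteq> 0 \<and> s \<noteq> x then 1 else 0) + sign_changes (x # xs))"
  by (simp add: sign_changes_def)

lemma sign_changes_snoc: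
  "sign_changes (xs @ [x]) =
     sign_changes xs + (if x \<noteq> 0 \<and> last_nonzero xs \<noteq> 0 \<and> last_nonzero xs \<noteq> x then 1 else 0)"
proof -
  have "sign_changes_nz (ys @ [x]) = sign_changes_nz ys + (if ys \<noteq> [] \<and> last ys \<noteq> x then 1 else 0)" for ys
    by (induction ys rule: sign_changes_nz.induct) auto
  moreover have "filter (\<lambda>x. x \<noteq> 0) xs \<noteq> [] \<Longrightarrow> last (filter (\<lambda>x. x \<noteq> 0) xs) \<noteq> 0"
    using last_in_set by fastforce
  ultimately show ?thesis
    by (auto simp: sign_changes_def last_nonzero_def)
qed

lemma sign_changes_append:
  "sign_changes (xs @ ys) = sign_changes xs + sign_changes (last_nonzero xs # ys)"
proof (induction ys arbitrary: xs)
  case (Cons y ys)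
  have "xs @ y # ys = (xs @ [y]) @ ys" by simp
  then show ?case using Cons.IH[of "xs @ [y]"] by (simp add: sign_changes_snoc)
qed simp

lemma sign_changes_one_sided:
  assumes "set xs \<subseteq> {0, s}"
  shows "sign_changes xs = 0"
proof -
  have "\<forall>y\<in>set ys. y = s \<Longrightarrow> sign_changes_nz ys = 0" for ys
    by (induction ys rule: sign_changes_nz.induct) auto
  moreover have "\<forall>y\<in>set (filter (\<lambda>x. x \<noteq> 0) xs). y = s" using assms by auto
  ultimately show ?thesis by (simp add: sign_changes_def)
qed

lemma sign_changes_without_both_signs:
  assumes "set xs \<subseteq> {-1, 0, 1}" and "\<not> (1 \<in> set xs \<and> -1 \<in> set xs)"
  shows "sign_changes xs = 0"
proof (cases "1 \<in> set xs")
  case True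
  then have "set xs \<subseteq> {0, 1}" using assms by auto
  then show ?thesis by (rule sign_changes_one_sided)
next
  case False
  then have "set xs \<subseteq> {0, -1}" using assms by auto
  then show ?thesis by (rule sign_changes_one_sided)
qed

lemma sign_changes_Cons_one_sided:
  assumes "set xs \<subseteq> {0, s}" and "s \<in> set xs" and "s \<noteq> 0"
  shows "sign_changes (x # xs) = (if x \<noteq> 0 \<and> x \<noteq> s then 1 else 0)"
  using assms
proof (induction xs)
  case (Cons y ys)
  then show ?case using sign_changes_one_sided[of "s # ys" s] by auto
qed simp

lemma sign_changes_uminus [simp]: "sign_changes (map uminus xs) = sign_changes xs"
  by (induction xs rule: rev_induct) (auto simp: sign_changes_snoc)

lemma sign_changes_running_last_nonzero:
  "sign_changes (map (\<lambda>i. last_nonzero (map P [0..<Suc i])) [0..<n]) = sign_changes (map P [0..<n]) \<and>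
   last_nonzero (map (\<lambda>i. last_nonzero (map P [0..<Suc i])) [0..<n]) = last_nonzero (map P [0..<n])"
  by (induction n) (auto simp: sign_changes_snoc)

text \<open>ps \<in> (x - 1) qs over S, read from the constant term upwards: z is the coefficient of qs
  below the current one (0 at the start), so that p_i \<in> -q_i \<boxplus> q_(i-1).\<close>
fun in_sign_lin_mult :: "int \<Rightarrow> int list \<Rightarrow> int list \<Rightarrow> bool" where
  "in_sign_lin_mult z [] ps \<longleftrightarrow> ps = [z]"
| "in_sign_lin_mult z (q # qs) ps \<longleftrightarrow>
     (case ps of [] \<Rightarrow> False | p # ps' \<Rightarrow> p \<in> shadd (- q) z \<and> in_sign_lin_mult q qs ps')"

lemma in_sign_lin_multI:
  assumes "length ps = length qs + 1"
    and "\<And>i. i \<le> length qs \<Longrightarrow> ps ! i \<in> shadd (- (qs @ [0]) ! i) ((z # qs) ! i)"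
  shows "in_sign_lin_mult z qs ps"
  using assms
proof (induction qs arbitrary: z ps)
  case Nil
  then show ?case by (cases ps) (auto simp: shadd_def)
next
  case (Cons q qs)
  then obtain p ps' where ps: "ps = p # ps'" by (cases ps) auto
  have "p \<in> shadd (- q) z" using Cons.prems(2)[of 0] ps by simp
  moreover have "in_sign_lin_mult q qs ps'"
    using Cons.prems(1) Cons.prems(2)[of "Suc _"] ps by (intro Cons.IH) auto
  ultimately show ?case using ps by simp
qed

text \<open>The invariant: s and t are the last nonzero signs of the parts of ps and qs consumed so
  far and z is the last consumed coefficient of qs; when s = t, ps still owes a sign change.\<close>
lemma sign_changes_in_sign_lin_mult_gen:
  assumes "in_sign_lin_mult z qs ps" and "set qs \<subseteq> {-1, 0, 1}"
    and "s \<in> {-1, 0, 1}" and "t \<in> {-1, 0, 1}" and "z \<in> {0, t}"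
    and "t = 0 \<longleftrightarrow> s = 0" and "t \<noteq> 0 \<and> z = 0 \<longrightarrow> s = t"
    and "t \<noteq> 0 \<or> (\<exists>q\<in>set qs. q \<noteq> 0)"
  shows "sign_changes (t # qs) + 1 \<le> sign_changes (s # ps) + (if s = t \<and> t \<noteq> 0 then 1 else 0)"
  using assms
proof (induction qs arbitrary: z s t ps)
  case Nil
  then show ?case by auto
next
  case (Cons q qs)
  from Cons.prems(1) obtain p ps' where ps: "ps = p # ps'" and p: "p \<in> shadd (- q) z"
    and rest: "in_sign_lin_mult q qs ps'" by (cases ps) auto
  define t' where "t' = (if q = 0 then t else q)"
  define s' where "s' = (if p = 0 then s else p)"
  have q: "q \<in> {-1, 0, 1}" using Cons.prems(2) by simp
  then have p3: "p \<in> {-1, 0, 1}" using p Cons.prems(4,5) by (auto simp: shadd_def split: if_splits)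
  have IH: "sign_changes (t' # qs) + 1 \<le> sign_changes (s' # ps') + (if s' = t' \<and> t' \<noteq> 0 then 1 else 0)"
    using Cons.prems p q p3 unfolding t'_def s'_def
    by (intro Cons.IH[OF rest]) (auto simp: shadd_def split: if_splits)
  show ?case
    using q p3 Cons.prems(3-7) p IH unfolding ps t'_def s'_def
    by (simp only: insert_iff singleton_iff empty_iff simp_thms) (elim disjE; simp add: shadd_def)
qed

lemma sign_changes_in_sign_lin_mult:
  assumes "in_sign_lin_mult 0 qs ps" and "set qs \<subseteq> {-1, 0, 1}" and "\<exists>q\<in>set qs. q \<noteq> 0"
  shows "sign_changes qs + 1 \<le> sign_changes ps"
  using sign_changes_in_sign_lin_mult_gen[OF assms(1,2), of 0 0] assms(3) by simp

section \<open>Absolute values and levels in TR\<close>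

fun tabs :: "tr \<Rightarrow> ereal" where
  "tabs TInf = \<infinity>"
| "tabs (TR s v) = ereal v"

fun tshift :: "tr \<Rightarrow> real \<Rightarrow> tr" where
  "tshift TInf k = TInf"
| "tshift (TR s v) k = TR s (v + k)"

definition level_sign :: "real \<Rightarrow> tr \<Rightarrow> int" where
  "level_sign m x = (if tabs x = ereal m then tsign x else 0)"

lemma tmul_TR_True_left: "tmul (TR True k) x = tshift x k"
  by (cases x) auto

lemma tmul_TR_True_right: "tmul x (TR True k) = tshift x k"
  by (cases x) auto

lemma tpow_TR_True: "tpow (TR True r) i = TR True (real i * r)"
  by (induction i) (auto simp: tpow_def tone_def algebra_simps)

lemma tshift_tshift [simp]: "tshift (tshift x a) b = tshift x (a + b)"
  by (cases x) auto

lemma tshift_0 [simp]: "tshift x 0 = x"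
  by (cases x) auto

lemma tshift_inject [simp]: "tshift x k = tshift y k \<longleftrightarrow> x = y"
  by (cases x; cases y) auto

lemma tneg_tshift [simp]: "tneg (tshift x k) = tshift (tneg x) k"
  by (cases x) auto

lemma tneg_tneg [simp]: "tneg (tneg x) = x"
  by (cases x) auto

lemma tabs_tshift [simp]: "tabs (tshift x k) = tabs x + ereal k"
  by (cases x) auto

lemma ereal_le_add_ereal_iff [simp]: "ereal a \<le> e + ereal k \<longleftrightarrow> ereal (a - k) \<le> e"
  by (cases e) auto

lemma tabs_tneg [simp]: "tabs (tneg x) = tabs x"
  by (cases x) auto

lemma level_sign_TInf [simp]: "level_sign m TInf = 0"
  by (simp add: level_sign_def)

lemma level_sign_tshift [simp]: "level_sign m (tshift x k) = level_sign (m - k) x"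
  by (cases x) (auto simp: level_sign_def)

lemma level_sign_tneg [simp]: "level_sign m (tneg x) = - level_sign m x"
  by (cases x) (auto simp: level_sign_def)

lemma level_sign_range: "level_sign m x \<in> {-1, 0, 1}"
  by (cases x) (auto simp: level_sign_def)

lemma level_sign_eq_0_iff: "level_sign m x = 0 \<longleftrightarrow> tabs x \<noteq> ereal m"
  by (cases x) (auto simp: level_sign_def)

lemma level_sign_TR_self_nonzero: "level_sign m (TR c m) \<noteq> 0"
  by (simp add: level_sign_def)

lemma level_sign_eq_tsign_iff: "level_sign m x = tsign (TR c m) \<longleftrightarrow> x = TR c m"
  by (cases x; cases c) (auto simp: level_sign_def)

lemma level_sign_eq_uminus_imp_tneg:
  "level_sign m x = - level_sign m y \<Longrightarrow> level_sign m y \<noteq> 0 \<Longrightarrow> x = tneg y"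
  by (cases x; cases y) (auto simp: level_sign_def split: if_splits)

lemma level_sign_without_opposite:
  "TR (\<not> c) m \<notin> set xs \<Longrightarrow> x \<in> set xs \<Longrightarrow> level_sign m x \<in> {0, tsign (TR c m)}"
  by (cases x rule: tr.exhaust; cases c) (auto simp: level_sign_def)

lemma hadd_comm: "hadd x y = hadd y x"
  by (cases x; cases y) auto

lemma hadd_TInf_left [simp]: "hadd TInf y = {y}"
  by (cases y) auto

lemma hadd_nonempty: "hadd x y \<noteq> {}"
  by (cases x; cases y) auto

lemma hadd_tshift: "hadd (tshift x k) (tshift y k) = (\<lambda>z. tshift z k) ` hadd x y"
proof (cases x; cases y)
  fix s v s' v' assume x: "x = TR s v" and y: "y = TR s' v'"
  have "{TR b t |b t. v + k \<le> t} = (\<lambda>z. tshift z k) ` {TR b t |b t. v \<le> t}"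
  proof (rule set_eqI, rule iffI)
    fix z assume "z \<in> {TR b t |b t. v + k \<le> t}"
    then obtain b t where "z = TR b t" "v + k \<le> t" by auto
    then show "z \<in> (\<lambda>z. tshift z k) ` {TR b t |b t. v \<le> t}"
      by (intro image_eqI[where x = "TR b (t - k)"]) auto
  qed auto
  then show ?thesis using x y by auto
qed auto

lemma tshift_mem_hadd_iff: "tshift z k \<in> hadd (tshift x k) (tshift y k) \<longleftrightarrow> z \<in> hadd x y"
  by (auto simp: hadd_tshift)

lemma hadd_level:
  assumes "ereal m \<le> tabs x" and "ereal m \<le> tabs y" and "z \<in> hadd x y"
  shows "ereal m \<le> tabs z \<and> level_sign m z \<in> shadd (level_sign m x) (level_sign m y)"
  using assms
  by (cases x; cases y; cases z) (auto simp: shadd_def level_sign_def split: if_splits)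

lemma hadd_absorb: "tabs x \<le> tabs y \<Longrightarrow> x \<in> hadd x y"
  by (cases x; cases y) auto

lemma hadd_cancel: "y \<noteq> TInf \<Longrightarrow> tabs y \<le> tabs z \<Longrightarrow> z \<in> hadd (tneg y) y"
  by (cases y; cases z) auto

lemma hadd_summand_exists:
  assumes "ereal m \<le> tabs x" and "ereal m \<le> tabs z"
  obtains y where "ereal m \<le> tabs y" and "z \<in> hadd y x"
proof (cases "tabs z \<le> tabs x")
  case True
  then show ?thesis using assms by (intro that[of z] hadd_absorb) auto
next
  case False
  then have "x \<noteq> TInf" by auto
  then show ?thesis using assms False hadd_cancel[of x z] by (intro that[of "tneg x"]) auto
qed

lemma hsum_snoc: "hsum (xs @ [x]) = (\<Union>y\<in>hsum xs. hadd y x)"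
  by (simp add: hsum_def)

lemma hsum_nonempty: "hsum xs \<noteq> {}"
  by (induction xs rule: rev_induct) (auto simp: hsum_def hadd_nonempty)

lemma hsum_one_sided:
  assumes "\<forall>x\<in>set xs. ereal m \<le> tabs x \<and> level_sign m x \<in> {0, b}" and "z \<in> hsum xs"
  shows "ereal m \<le> tabs z \<and> level_sign m z \<in> {0, b} \<and>
    (level_sign m z = 0 \<longleftrightarrow> (\<forall>x\<in>set xs. level_sign m x = 0))"
  using assms
proof (induction xs arbitrary: z rule: rev_induct)
  case Nil
  then show ?case by (simp add: hsum_def)
next
  case (snoc x xs)
  obtain y where y: "y \<in> hsum xs" and z: "z \<in> hadd y x"
    using snoc.prems(2) unfolding hsum_snoc by blast
  have IH: "ereal m \<le> tabs y \<and> level_sign m y \<in> {0, b} \<and>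
      (level_sign m y = 0 \<longleftrightarrow> (\<forall>x\<in>set xs. level_sign m x = 0))"
    using snoc.prems(1) by (intro snoc.IH[OF _ y]) auto
  moreover have x: "ereal m \<le> tabs x" "level_sign m x \<in> {0, b}" using snoc.prems(1) by auto
  moreover have "ereal m \<le> tabs z \<and> level_sign m z \<in> shadd (level_sign m y) (level_sign m x)"
    using hadd_level[OF _ _ z] IH x by blast
  ultimately have "ereal m \<le> tabs z \<and> level_sign m z \<in> {0, b} \<and>
      (level_sign m z = 0 \<longleftrightarrow> level_sign m y = 0 \<and> level_sign m x = 0)"
    by (auto simp: shadd_def split: if_splits)
  then show ?case using IH by auto
qed

lemma hsum_both_signs:
  assumes "\<forall>x\<in>set xs. ereal m \<le> tabs x" and "TR True m \<in> set xs" and "TR False m \<in> set xs"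
    and "ereal m \<le> tabs z"
  shows "z \<in> hsum xs"
  using assms
proof (induction xs arbitrary: z rule: rev_induct)
  case Nil
  then show ?case by simp
next
  case (snoc x xs)
  have x: "ereal m \<le> tabs x" using snoc.prems(1) by simp
  show ?case
  proof (cases "TR True m \<in> set xs \<and> TR False m \<in> set xs")
    case True
    obtain y where "ereal m \<le> tabs y" and "z \<in> hadd y x" using hadd_summand_exists[OF x snoc.prems(4)] .
    then show ?thesis using True snoc by (auto simp: hsum_snoc)
  next
    case False
    then obtain c where c: "TR c m \<in> set xs" "TR (\<not> c) m \<notin> set xs" and xc: "x = TR (\<not> c) m"
      using snoc.prems(2,3) by (cases "TR True m \<in> set xs") auto
    have one_sided: "\<forall>x\<in>set xs. ereal m \<le> tabs x \<and> level_sign m x \<in> {0, tsign (TR c m)}"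
      using snoc.prems(1) level_sign_without_opposite[OF c(2)] by simp
    obtain y where y: "y \<in> hsum xs" using hsum_nonempty by blast
    have "\<not> (\<forall>x\<in>set xs. level_sign m x = 0)" using c(1) level_sign_TR_self_nonzero by blast
    then have "level_sign m y = tsign (TR c m)" using hsum_one_sided[OF one_sided y] by blast
    then have "y = TR c m" by (simp only: level_sign_eq_tsign_iff)
    moreover have "z \<in> hadd (TR c m) (TR (\<not> c) m)" using snoc.prems(4) by (cases z; cases c) auto
    ultimately show ?thesis using y xc unfolding hsum_snoc by blast
  qed
qed

lemma TInf_in_hsum_iff:
  assumes "\<forall>x\<in>set xs. ereal m \<le> tabs x" and "\<exists>x\<in>set xs. tabs x = ereal m"
  shows "TInf \<in> hsum xs \<longleftrightarrow> TR True m \<in> set xs \<and> TR False m \<in> set xs"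
proof
  assume root: "TInf \<in> hsum xs"
  obtain x where x: "x \<in> set xs" "tabs x = ereal m" using assms(2) by blast
  then obtain c where "x = TR c m" by (cases x rule: tr.exhaust) auto
  with x have c: "TR c m \<in> set xs" by simp
  have "TR (\<not> c) m \<in> set xs"
  proof (rule ccontr)
    assume "TR (\<not> c) m \<notin> set xs"
    then have "\<forall>x\<in>set xs. ereal m \<le> tabs x \<and> level_sign m x \<in> {0, tsign (TR c m)}"
      using assms(1) level_sign_without_opposite by simp
    then have "level_sign m (TR c m) = 0" using hsum_one_sided[OF _ root] c level_sign_TInf by blast
    then show False using level_sign_TR_self_nonzero by blast
  qed
  with c show "TR True m \<in> set xs \<and> TR False m \<in> set xs" by (cases c) auto
qed (use assms(1) hsum_both_signs in auto)

section \<open>The terms of a polynomial at (+1, r)\<close>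

definition term_at :: "real \<Rightarrow> tr list \<Rightarrow> nat \<Rightarrow> tr" where
  "term_at r cs i = tshift (if i < length cs then cs ! i else TInf) (real i * r)"

lemma term_at_Cons_0 [simp]: "term_at r (c # cs) 0 = c"
  by (simp add: term_at_def)

lemma term_at_Cons_Suc [simp]: "term_at r (c # cs) (Suc i) = tshift (term_at r cs i) r"
  by (simp add: term_at_def algebra_simps)

lemma term_at_beyond [simp]: "length cs \<le> i \<Longrightarrow> term_at r cs i = TInf"
  by (simp add: term_at_def)

lemma peval_TR_True: "peval cs (TR True r) = hsum (map (term_at r cs) [0..<length cs])"
  unfolding peval_def
  by (intro arg_cong[where f = hsum] map_cong) (auto simp: term_at_def tpow_TR_True tmul_TR_True_right)

lemma term_val_eq_Some_iff:
  "i < length cs \<Longrightarrow> term_val cs r i = Some v \<longleftrightarrow> tabs (term_at r cs i) = ereal v"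
  by (cases "cs ! i") (auto simp: term_val_def term_at_def)

lemma initial_form_eq_level_signs:
  "initial_form r cs = map (\<lambda>i. level_sign (min_val cs r) (term_at r cs i)) [0..<length cs]"
  unfolding initial_form_def
proof (intro map_cong refl)
  fix i assume "i \<in> set [0..<length cs]"
  then show "(if term_val cs r i = Some (min_val cs r) then tsign (cs ! i) else 0) =
      level_sign (min_val cs r) (term_at r cs i)"
    by (cases "cs ! i") (auto simp: term_val_eq_Some_iff level_sign_def term_at_def)
qed

lemma finite_term_vals: "finite {v. \<exists>i<length cs. term_val cs r i = Some v}"
proof (rule finite_subset)
  show "{v. \<exists>i<length cs. term_val cs r i = Some v} \<subseteq> (\<lambda>i. the (term_val cs r i)) ` {..<length cs}"
    by force
qed simp

lemma min_val_le:
  assumes "i < length cs"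
  shows "ereal (min_val cs r) \<le> tabs (term_at r cs i)"
proof (cases "term_at r cs i")
  case (TR s v)
  then have "term_val cs r i = Some v" using assms term_val_eq_Some_iff by simp
  then show ?thesis unfolding min_val_def TR using assms by (auto intro: Min_le[OF finite_term_vals])
qed simp

lemma min_val_attained:
  assumes "\<exists>c\<in>set cs. c \<noteq> TInf"
  obtains i where "i < length cs" and "tabs (term_at r cs i) = ereal (min_val cs r)"
proof -
  from assms obtain j s v where j: "j < length cs" "cs ! j = TR s v" by (metis in_set_conv_nth tr.exhaust)
  then have "term_val cs r j = Some (v + real j * r)" by (simp add: term_val_def)
  then have "min_val cs r \<in> {v. \<exists>i<length cs. term_val cs r i = Some v}"
    unfolding min_val_def using finite_term_vals j(1) by (intro Min_in) auto
  then show ?thesis using that term_val_eq_Some_iff by blast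
qed

lemma min_val_eqI:
  assumes "\<And>i. i < length cs \<Longrightarrow> ereal m \<le> tabs (term_at r cs i)"
    and "i < length cs" and "level_sign m (term_at r cs i) \<noteq> 0"
  shows "min_val cs r = m"
  unfolding min_val_def
proof (rule Min_eqI[OF finite_term_vals])
  show "m \<le> v" if "v \<in> {v. \<exists>i<length cs. term_val cs r i = Some v}" for v
    using that assms(1) term_val_eq_Some_iff by force
  show "m \<in> {v. \<exists>i<length cs. term_val cs r i = Some v}"
    using assms(2,3) term_val_eq_Some_iff level_sign_eq_0_iff by blast
qed

lemma is_root_iff_initial_form:
  assumes "\<exists>c\<in>set cs. c \<noteq> TInf"
  shows "is_root cs (TR True r) \<longleftrightarrow> 1 \<in> set (initial_form r cs) \<and> -1 \<in> set (initial_form r cs)"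
proof -
  let ?m = "min_val cs r" and ?ts = "map (term_at r cs) [0..<length cs]"
  have sign_in: "tsign (TR b ?m) \<in> set (initial_form r cs) \<longleftrightarrow> TR b ?m \<in> set ?ts" for b
    unfolding initial_form_eq_level_signs
    by (force simp: image_iff level_sign_eq_tsign_iff eq_commute[of "tsign _"] simp del: tsign.simps)
  obtain i where "i < length cs" "tabs (term_at r cs i) = ereal ?m"
    using min_val_attained[OF assms] .
  then have "TInf \<in> hsum ?ts \<longleftrightarrow> TR True ?m \<in> set ?ts \<and> TR False ?m \<in> set ?ts"
    using min_val_le by (intro TInf_in_hsum_iff) auto
  then show ?thesis
    using sign_in[of True] sign_in[of False] by (simp add: is_root_def peval_TR_True)
qed

section \<open>Division by x - a and the upper bound\<close>

text \<open>Multiplying the i-th condition of in_lin_mult by a^i turns it into a relation between the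
  i-th term of p and the terms of x q at a.\<close>
lemma in_lin_mult_TR_True_iff:
  "in_lin_mult cs (TR True r) ds \<longleftrightarrow>
     ds \<noteq> [] \<and> length cs = length ds + 1 \<and>
     (\<forall>i<length cs. term_at r cs i \<in> hadd (tneg (term_at r (TInf # ds) (Suc i))) (term_at r (TInf # ds) i))"
proof (cases "ds \<noteq> [] \<and> length cs = length ds + 1")
  case True
  define n where "n = length ds"
  have n: "1 \<le> n" "length cs = n + 1" using True by (auto simp: n_def Suc_le_eq)
  have cond_iff: "term_at r cs i \<in> hadd (tneg (term_at r (TInf # ds) (Suc i))) (term_at r (TInf # ds) i) \<longleftrightarrow>
      (i = 0 \<longrightarrow> cs ! 0 = tneg (tmul (TR True r) (ds ! 0))) \<and>
      (1 \<le> i \<and> i \<le> n - 1 \<longrightarrow> cs ! i \<in> hadd (tneg (tmul (TR True r) (ds ! i))) (ds ! (i - 1))) \<and>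
      (i = n \<longrightarrow> cs ! n = ds ! (n - 1))" if "i \<le> n" for i
  proof -
    consider "i = 0" | "1 \<le> i" "i \<le> n - 1" | "i = n" "i \<noteq> 0" using \<open>i \<le> n\<close> by linarith
    then show ?thesis
    proof cases
      case 1
      then show ?thesis using n by (auto simp: term_at_def n_def tmul_TR_True_left)
    next
      case 2
      then obtain j where j: "i = Suc j" "j < n" by (cases i) auto
      have "term_at r cs i = tshift (cs ! i) (real i * r)"
        "term_at r (TInf # ds) (Suc i) = tshift (tshift (ds ! i) r) (real i * r)"
        "term_at r (TInf # ds) i = tshift (ds ! (i - 1)) (real i * r)"
        using 2 j n by (auto simp: term_at_def n_def algebra_simps)
      then show ?thesis
        using 2 n by (simp only: tneg_tshift tshift_mem_hadd_iff tmul_TR_True_left) auto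
    next
      case 3
      then have "term_at r cs i = tshift (cs ! n) (real n * r)"
        "term_at r (TInf # ds) (Suc i) = TInf"
        "term_at r (TInf # ds) i = tshift (ds ! (n - 1)) (real n * r)"
        using n by (auto simp: term_at_def n_def algebra_simps of_nat_diff)
      then show ?thesis using 3 by auto
    qed
  qed
  show ?thesis
    unfolding in_lin_mult_def Let_def n_def[symmetric] using True n cond_iff
    by (auto simp: less_Suc_eq_le)
qed (auto simp: in_lin_mult_def Let_def)

lemma in_lin_mult_last:
  assumes "in_lin_mult cs a ds"
  shows "last ds = last cs"
proof -
  from assms have "length ds \<ge> 1" "length cs = length ds + 1" "cs ! length ds = ds ! (length ds - 1)"
    unfolding in_lin_mult_def Let_def by auto
  moreover from this have "ds \<noteq> []" "cs \<noteq> []" by auto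
  ultimately show ?thesis by (simp add: last_conv_nth)
qed

lemma sign_changes_initial_form_quotient_le:
  assumes quot: "in_lin_mult cs (TR True r) ds" and lc: "last cs \<noteq> TInf"
  shows "sign_changes (initial_form r ds) + 1 \<le> sign_changes (initial_form r cs)"
proof -
  define n where "n = length ds"
  define m where "m = min_val ds r + r"
  define U where "U = term_at r (TInf # ds)"
  define Q where "Q = initial_form r ds"
  define P where "P = map (\<lambda>i. level_sign m (term_at r cs i)) [0..<n + 1]"
  have len: "length cs = n + 1" and "ds \<noteq> []"
    and rel: "\<And>i. i \<le> n \<Longrightarrow> term_at r cs i \<in> hadd (tneg (U (Suc i))) (U i)"
    using quot by (auto simp: in_lin_mult_TR_True_iff n_def U_def)
  have Q: "Q = map (\<lambda>i. level_sign m (U (Suc i))) [0..<n]"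
    by (simp add: Q_def initial_form_eq_level_signs m_def n_def U_def)
  have U_ge: "ereal m \<le> tabs (U j)" for j
  proof (cases j)
    case (Suc i)
    then show ?thesis
      using min_val_le[of i ds r] by (cases "i < n") (auto simp: U_def m_def n_def)
  qed (simp add: U_def)
  have U_sign: "(Q @ [0]) ! i = level_sign m (U (Suc i))" "(0 # Q) ! i = level_sign m (U i)"
    if "i \<le> n" for i
  proof -
    show "(Q @ [0]) ! i = level_sign m (U (Suc i))"
      using that by (cases "i < n") (auto simp: Q nth_append U_def n_def)
    show "(0 # Q) ! i = level_sign m (U i)"
      using that by (cases i) (auto simp: Q U_def n_def)
  qed
  have P_nth: "P ! i = level_sign m (term_at r cs i)" if "i \<le> n" for i
    using that by (simp add: P_def less_Suc_eq_le del: upt_Suc)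
  have P_level: "ereal m \<le> tabs (term_at r cs i) \<and> P ! i \<in> shadd (- (Q @ [0]) ! i) ((0 # Q) ! i)"
    if "i \<le> n" for i
    using hadd_level[OF _ U_ge rel[OF that]] U_ge U_sign[OF that] that by (simp add: P_nth)
  have "in_sign_lin_mult 0 Q P"
    by (rule in_sign_lin_multI) (use P_level in \<open>auto simp: P_def Q\<close>)
  moreover have "set Q \<subseteq> {-1, 0, 1}" using level_sign_range by (auto simp: Q)
  moreover have "\<exists>q\<in>set Q. q \<noteq> 0"
  proof -
    have "\<exists>c\<in>set ds. c \<noteq> TInf"
      using in_lin_mult_last[OF quot] lc last_in_set[OF \<open>ds \<noteq> []\<close>] by metis
    then obtain i where "i < n" "tabs (term_at r ds i) = ereal (min_val ds r)"
      using min_val_attained n_def by metis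
    then show ?thesis by (auto simp: Q_def initial_form_eq_level_signs n_def level_sign_eq_0_iff)
  qed
  ultimately have changes: "sign_changes Q + 1 \<le> sign_changes P"
    by (rule sign_changes_in_sign_lin_mult)
  then have "\<not> set P \<subseteq> {0, 0}" using sign_changes_one_sided by fastforce
  then obtain i where "i \<le> n" "P ! i \<noteq> 0"
    by (force simp: in_set_conv_nth less_Suc_eq_le P_def simp del: upt_Suc)
  then have "min_val cs r = m"
    using P_level len P_nth by (intro min_val_eqI[of cs m r i]) auto
  then have "initial_form r cs = P" by (simp add: initial_form_eq_level_signs P_def len)
  then show ?thesis using changes Q_def by simp
qed

section \<open>A quotient with one sign change less\<close>

text \<open>Ties go to the latest term, so that its level sign is the last nonzero level sign so far.\<close>
fun running_min :: "(nat \<Rightarrow> tr) \<Rightarrow> nat \<Rightarrow> tr" where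
  "running_min t 0 = t 0"
| "running_min t (Suc i) =
     (if tabs (t (Suc i)) \<le> tabs (running_min t i) then t (Suc i) else running_min t i)"

lemma running_min_hadd: "t (Suc i) \<in> hadd (running_min t (Suc i)) (tneg (running_min t i))"
proof (cases "tabs (t (Suc i)) \<le> tabs (running_min t i)")
  case True
  then show ?thesis by (simp add: hadd_absorb)
next
  case False
  then have "running_min t i \<noteq> TInf" by auto
  then show ?thesis using False hadd_cancel[of "running_min t i" "t (Suc i)"] by (simp add: hadd_comm)
qed

lemma running_min_level:
  assumes "\<And>k. k \<le> i \<Longrightarrow> ereal C \<le> tabs (t k)"
  shows "ereal C \<le> tabs (running_min t i) \<and>
    level_sign C (running_min t i) = last_nonzero (map (\<lambda>k. level_sign C (t k)) [0..<Suc i])"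
  using assms
proof (induction i)
  case (Suc i)
  then have IH: "ereal C \<le> tabs (running_min t i)"
      "level_sign C (running_min t i) = last_nonzero (map (\<lambda>k. level_sign C (t k)) [0..<Suc i])"
    by auto
  have t: "ereal C \<le> tabs (t (Suc i))" using Suc.prems by simp
  have snoc: "map (\<lambda>k. level_sign C (t k)) [0..<Suc (Suc i)] =
      map (\<lambda>k. level_sign C (t k)) [0..<Suc i] @ [level_sign C (t (Suc i))]"
    by simp
  show ?case
  proof (cases "level_sign C (t (Suc i)) = 0")
    case False
    then have "tabs (t (Suc i)) \<le> tabs (running_min t i)"
      using IH(1) by (simp add: level_sign_eq_0_iff)
    then show ?thesis using False t by (simp add: snoc del: upt_Suc)
  next
    case True
    then have gt: "ereal C < tabs (t (Suc i))" using t by (simp add: level_sign_eq_0_iff)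
    show ?thesis
    proof (cases "tabs (t (Suc i)) \<le> tabs (running_min t i)")
      case le: True
      then have "level_sign C (running_min t i) = 0" using gt by (simp add: level_sign_eq_0_iff)
      then show ?thesis using True le t IH by (simp add: snoc del: upt_Suc)
    qed (use True IH in \<open>simp add: snoc del: upt_Suc\<close>)
  qed
qed simp

text \<open>Candidate terms u_i = d_i a^(i+1) of a quotient q of a polynomial of degree n with terms t:
  below h they come from dividing upwards from the constant term, from h on from dividing
  downwards from the leading term.\<close>
definition sweep_terms :: "(nat \<Rightarrow> tr) \<Rightarrow> nat \<Rightarrow> nat \<Rightarrow> nat \<Rightarrow> tr" where
  "sweep_terms t n h i =
     (if i < h then tneg (running_min t i) else running_min (\<lambda>k. t (n - k)) (n - Suc i))"

text \<open>The terms of x q at a, given the terms u of q at a.\<close>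
definition shift_terms :: "nat \<Rightarrow> (nat \<Rightarrow> tr) \<Rightarrow> nat \<Rightarrow> tr" where
  "shift_terms n u j = (if j = 0 \<or> n < j then TInf else u (j - 1))"

lemma in_lin_mult_from_terms:
  assumes "length cs = Suc n" and "0 < n"
    and "\<And>i. i \<le> n \<Longrightarrow> term_at r cs i \<in> hadd (tneg (shift_terms n u (Suc i))) (shift_terms n u i)"
  shows "in_lin_mult cs (TR True r) (map (\<lambda>i. tshift (u i) (- (real (Suc i) * r))) [0..<n])"
proof -
  let ?ds = "map (\<lambda>i. tshift (u i) (- (real (Suc i) * r))) [0..<n]"
  have U: "term_at r (TInf # ?ds) j = shift_terms n u j" for j
    by (cases j) (auto simp: shift_terms_def term_at_def algebra_simps)
  show ?thesis
    unfolding in_lin_mult_TR_True_iff U using assms by (auto simp: less_Suc_eq_le)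
qed

text \<open>Each sweep satisfies the division relation on its own, so only the seam at h needs checking.\<close>
lemma sweep_terms_hadd_of_seam:
  fixes t :: "nat \<Rightarrow> tr" and n h i :: nat
  defines "U \<equiv> shift_terms n (sweep_terms t n h)"
  assumes "h < n" and seam: "t h \<in> hadd (tneg (U (Suc h))) (U h)" and "i \<le> n"
  shows "t i \<in> hadd (tneg (U (Suc i))) (U i)"
proof -
  consider "i < h" | "i = h" | "h < i" "i < n" | "i = n" using assms by linarith
  then show ?thesis
  proof cases
    case 1
    show ?thesis
    proof (cases i)
      case 0
      then show ?thesis using 1 assms(2) by (simp add: U_def shift_terms_def sweep_terms_def)
    next
      case (Suc k)
      then show ?thesis
        using 1 assms(2) running_min_hadd[of t k] by (simp add: U_def shift_terms_def sweep_terms_def)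
    qed
  next
    case 2
    then show ?thesis using seam by simp
  next
    case 3
    define j where "j = n - Suc i"
    have j: "n - i = Suc j" "n - Suc j = i" "n - Suc (i - 1) = Suc j" using 3 by (auto simp: j_def)
    have "t i \<in> hadd (running_min (\<lambda>k. t (n - k)) (Suc j)) (tneg (running_min (\<lambda>k. t (n - k)) j))"
      using running_min_hadd[of "\<lambda>k. t (n - k)" j] j by simp
    moreover have "U (Suc i) = running_min (\<lambda>k. t (n - k)) j"
      "U i = running_min (\<lambda>k. t (n - k)) (Suc j)"
      using 3 j by (auto simp: U_def shift_terms_def sweep_terms_def j_def)
    ultimately show ?thesis by (simp add: hadd_comm)
  next
    case 4
    then have "\<not> n - 1 < h" using assms(2) by linarith
    then show ?thesis using 4 assms(2) by (simp add: U_def shift_terms_def sweep_terms_def)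
  qed
qed

lemma obtain_last_sign_switch:
  fixes P :: "nat \<Rightarrow> int"
  assumes range: "\<And>k. P k \<in> {-1, 0, 1}"
    and pos: "i \<le> n" "P i = 1" and neg: "j \<le> n" "P j = -1"
  obtains h L \<sigma> where "h < L" "L \<le> n" "\<sigma> \<noteq> 0" "P h = - \<sigma>" "P L = \<sigma>"
    "\<And>k. h < k \<Longrightarrow> k \<le> n \<Longrightarrow> P k \<in> {0, \<sigma>}"
proof -
  define L where "L = Max {k. k \<le> n \<and> P k \<noteq> 0}"
  have "L \<in> {k. k \<le> n \<and> P k \<noteq> 0}"
    unfolding L_def using pos by (intro Max_in) auto
  then have L: "L \<le> n" "P L \<noteq> 0" by auto
  have L_max: "k \<le> L" if "k \<le> n" "P k \<noteq> 0" for k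
    using that by (auto simp: L_def intro: Max_ge)
  define \<sigma> where "\<sigma> = P L"
  have \<sigma>: "\<sigma> = 1 \<or> \<sigma> = -1" using L(2) range[of L] by (auto simp: \<sigma>_def)
  define h where "h = Max {k. k \<le> n \<and> P k = - \<sigma>}"
  have "h \<in> {k. k \<le> n \<and> P k = - \<sigma>}"
    unfolding h_def using \<sigma> pos neg by (intro Max_in) auto
  then have h: "h \<le> n" "P h = - \<sigma>" by auto
  have h_max: "k \<le> h" if "k \<le> n" "P k = - \<sigma>" for k
    using that by (auto simp: h_def intro: Max_ge)
  have "h \<le> L" using L_max[OF h(1)] h(2) \<sigma> by auto
  moreover have "h \<noteq> L" using h(2) \<sigma> unfolding \<sigma>_def by auto
  ultimately have "h < L" by simp
  moreover have "P k \<in> {0, \<sigma>}" if "h < k" "k \<le> n" for k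
    using h_max[of k] range[of k] \<sigma> that by auto
  moreover have "\<sigma> \<noteq> 0" using \<sigma> by auto
  ultimately show ?thesis using that L(1) h(2) \<sigma>_def by blast
qed

lemma sign_changes_glued:
  fixes P :: "nat \<Rightarrow> int"
  assumes "h < n" and "\<sigma> \<noteq> 0" and "P h = - \<sigma>"
    and "\<And>k. h < k \<Longrightarrow> k \<le> n \<Longrightarrow> P k \<in> {0, \<sigma>}" and "h < L" "L \<le> n" "P L = \<sigma>"
    and "set B \<subseteq> {0, \<sigma>}" and "\<sigma> \<in> set B"
  shows "sign_changes (map (\<lambda>i. - last_nonzero (map P [0..<Suc i])) [0..<h] @ B) + 1 =
    sign_changes (map P [0..<Suc n])"
proof -
  define l where "l = last_nonzero (map P [0..<h])"
  define X where "X = map (\<lambda>i. last_nonzero (map P [0..<Suc i])) [0..<h]"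
  define R where "R = map P [Suc h..<Suc n]"
  have X: "sign_changes X = sign_changes (map P [0..<h])" "last_nonzero X = l"
    using sign_changes_running_last_nonzero[of P h] by (simp_all add: X_def l_def)
  have "map (\<lambda>i. - last_nonzero (map P [0..<Suc i])) [0..<h] = map uminus X"
    by (simp add: X_def)
  then have lhs: "sign_changes (map (\<lambda>i. - last_nonzero (map P [0..<Suc i])) [0..<h] @ B) =
      sign_changes (map P [0..<h]) + (if l \<noteq> 0 \<and> - l \<noteq> \<sigma> then 1 else 0)"
    using assms(8,9,2) X by (simp add: sign_changes_append sign_changes_Cons_one_sided)
  have "[0..<Suc n] = [0..<h] @ [h..<Suc n]"
    using upt_add_eq_append[of 0 h "Suc n - h"] assms(1) by simp
  also have "[h..<Suc n] = h # [Suc h..<Suc n]"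
    using assms(1) by (simp add: upt_conv_Cons del: upt_Suc)
  finally have split: "map P [0..<Suc n] = map P [0..<h] @ - \<sigma> # R"
    using assms(3) by (simp add: R_def del: upt_Suc)
  have "set R \<subseteq> {0, \<sigma>}" using assms(4) by (force simp: R_def Suc_le_eq less_Suc_eq_le simp del: upt_Suc)
  moreover have "\<sigma> \<in> set R" using assms(5-7) by (force simp: R_def simp del: upt_Suc)
  ultimately
  have "sign_changes (- \<sigma> # R) = 1" using assms(2) by (simp add: sign_changes_Cons_one_sided)
  then have "sign_changes (map P [0..<Suc n]) =
      sign_changes (map P [0..<h]) + (if l \<noteq> 0 \<and> l \<noteq> - \<sigma> then 1 else 0) + 1"
    unfolding split sign_changes_append l_def using assms(2) by simp
  with lhs show ?thesis by auto
qed

context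
  fixes t :: "nat \<Rightarrow> tr" and C :: real and n h L :: nat and \<sigma> :: int
  assumes terms_ge: "\<And>k. ereal C \<le> tabs (t k)"
    and switch: "h < L" "L \<le> n" "\<sigma> \<noteq> 0" "level_sign C (t h) = - \<sigma>" "level_sign C (t L) = \<sigma>"
    and above: "\<And>k. h < k \<Longrightarrow> k \<le> n \<Longrightarrow> level_sign C (t k) \<in> {0, \<sigma>}"
begin

lemma sweep_terms_level:
  "ereal C \<le> tabs (sweep_terms t n h i)"
  "i < h \<Longrightarrow> level_sign C (sweep_terms t n h i) = - last_nonzero (map (\<lambda>k. level_sign C (t k)) [0..<Suc i])"
  "h \<le> i \<Longrightarrow> level_sign C (sweep_terms t n h i) =
     last_nonzero (map (\<lambda>k. level_sign C (t (n - k))) [0..<Suc (n - Suc i)])"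
  using running_min_level[of _ C t] running_min_level[of _ C "\<lambda>k. t (n - k)"] terms_ge
  by (auto simp: sweep_terms_def simp del: upt_Suc)

lemma level_signs_from_top:
  assumes "h \<le> i"
  shows "set (map (\<lambda>k. level_sign C (t (n - k))) [0..<Suc (n - Suc i)]) \<subseteq> {0, \<sigma>}"
proof
  fix x assume "x \<in> set (map (\<lambda>k. level_sign C (t (n - k))) [0..<Suc (n - Suc i)])"
  then obtain k where "k \<le> n - Suc i" "x = level_sign C (t (n - k))"
    by (auto simp: less_Suc_eq_le simp del: upt_Suc)
  moreover from this have "h < n - k" using assms switch by linarith
  ultimately show "x \<in> {0, \<sigma>}" using above by simp
qed

lemma level_sign_sweep_terms_seam: "level_sign C (sweep_terms t n h h) = \<sigma>"
proof -
  have "n - L \<in> set [0..<Suc (n - Suc h)]" "n - (n - L) = L" using switch by auto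
  then have "\<sigma> \<in> (\<lambda>k. level_sign C (t (n - k))) ` set [0..<Suc (n - Suc h)]"
    using switch(5) by (intro image_eqI[of _ _ "n - L"]) simp_all
  then show ?thesis
    using sweep_terms_level(3) level_signs_from_top[of h] switch(3)
    by (simp add: last_nonzero_one_sided del: upt_Suc)
qed

lemma sweep_terms_hadd:
  assumes "i \<le> n"
  shows "t i \<in> hadd (tneg (shift_terms n (sweep_terms t n h) (Suc i))) (shift_terms n (sweep_terms t n h) i)"
proof (rule sweep_terms_hadd_of_seam)
  show "h < n" using switch by simp
  have "t h = tneg (sweep_terms t n h h)"
    using level_sign_sweep_terms_seam switch by (intro level_sign_eq_uminus_imp_tneg[of C]) auto
  moreover have "tabs (t h) = ereal C"
    using switch(3,4) level_sign_eq_0_iff[of C "t h"] by simp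
  then have "tabs (t h) \<le> tabs (shift_terms n (sweep_terms t n h) h)"
    using sweep_terms_level(1) by (simp add: shift_terms_def)
  ultimately show "t h \<in> hadd (tneg (shift_terms n (sweep_terms t n h) (Suc h)))
      (shift_terms n (sweep_terms t n h) h)"
    using switch by (simp add: shift_terms_def hadd_absorb)
qed (rule assms)

lemma sign_changes_sweep_terms:
  "sign_changes (map (\<lambda>i. level_sign C (sweep_terms t n h i)) [0..<n]) + 1 =
    sign_changes (map (\<lambda>k. level_sign C (t k)) [0..<Suc n])"
proof -
  have "map (\<lambda>i. level_sign C (sweep_terms t n h i)) [0..<n] =
      map (\<lambda>i. - last_nonzero (map (\<lambda>k. level_sign C (t k)) [0..<Suc i])) [0..<h] @
      map (\<lambda>i. level_sign C (sweep_terms t n h i)) [h..<n]"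
    using switch upt_add_eq_append[of 0 h "n - h"] sweep_terms_level(2) by (simp del: upt_Suc)
  moreover have "set (map (\<lambda>i. level_sign C (sweep_terms t n h i)) [h..<n]) \<subseteq> {0, \<sigma>}"
    using sweep_terms_level(3) level_signs_from_top last_nonzero_in
    by (fastforce simp del: upt_Suc)
  moreover have "\<sigma> \<in> set (map (\<lambda>i. level_sign C (sweep_terms t n h i)) [h..<n])"
    using level_sign_sweep_terms_seam switch by force
  ultimately show ?thesis
    using switch above by (simp only:) (rule sign_changes_glued; simp)
qed

end

lemma exists_quotient_dropping_one_sign_change:
  assumes "cs \<noteq> []" and "last cs \<noteq> TInf" and "is_root cs (TR True r)"
  obtains ds where "in_lin_mult cs (TR True r) ds"
    and "sign_changes (initial_form r ds) + 1 = sign_changes (initial_form r cs)"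
proof -
  define n where "n = length cs - 1"
  define C where "C = min_val cs r"
  define t where "t = term_at r cs"
  have len: "length cs = Suc n" using assms(1) by (simp add: n_def)
  have init: "initial_form r cs = map (\<lambda>k. level_sign C (t k)) [0..<Suc n]"
    by (simp add: initial_form_eq_level_signs len C_def t_def)
  have terms_ge: "ereal C \<le> tabs (t k)" for k
    using min_val_le[of k cs r] by (cases "k < length cs") (auto simp: C_def t_def)
  have "\<exists>c\<in>set cs. c \<noteq> TInf" using assms(1,2) last_in_set by metis
  then have signs: "1 \<in> (\<lambda>k. level_sign C (t k)) ` {..n}" "-1 \<in> (\<lambda>k. level_sign C (t k)) ` {..n}"
    using assms(3) is_root_iff_initial_form[of cs r] unfolding init
    by (auto simp: atLeast0LessThan lessThan_Suc_atMost simp del: upt_Suc)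
  obtain i j where ij: "i \<le> n" "level_sign C (t i) = 1" "j \<le> n" "level_sign C (t j) = -1"
    using signs by force
  obtain h L \<sigma> where switch: "h < L" "L \<le> n" "\<sigma> \<noteq> 0"
      "level_sign C (t h) = - \<sigma>" "level_sign C (t L) = \<sigma>"
    and above: "\<And>k. h < k \<Longrightarrow> k \<le> n \<Longrightarrow> level_sign C (t k) \<in> {0, \<sigma>}"
    using obtain_last_sign_switch[of "\<lambda>k. level_sign C (t k)", OF level_sign_range ij] by blast
  define u where "u = sweep_terms t n h"
  define ds where "ds = map (\<lambda>i. tshift (u i) (- (real (Suc i) * r))) [0..<n]"
  note u_level = sweep_terms_level(1)[OF terms_ge switch above]
    and u_seam = level_sign_sweep_terms_seam[OF terms_ge switch above]
  have quot: "in_lin_mult cs (TR True r) ds"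
    unfolding ds_def using len switch sweep_terms_hadd[OF terms_ge switch above]
    by (intro in_lin_mult_from_terms) (auto simp: t_def u_def)
  have ds_terms: "term_at r ds i = tshift (u i) (- r)" if "i < n" for i
    using that by (simp add: ds_def term_at_def algebra_simps)
  have len_ds: "length ds = n" by (simp add: ds_def)
  have "min_val ds r = C - r"
    using switch u_level u_seam ds_terms len_ds by (intro min_val_eqI[of ds _ r h]) (auto simp: u_def)
  then have "initial_form r ds = map (\<lambda>i. level_sign C (u i)) [0..<n]"
    by (simp add: initial_form_eq_level_signs ds_terms len_ds)
  then show ?thesis
    using that quot sign_changes_sweep_terms[OF terms_ge switch above] init by (simp add: u_def)
qed

section \<open>The multiplicity\<close>

lemma mult_aux_eq_sign_changes:
  assumes "length cs = k" and "cs \<noteq> []" and "last cs \<noteq> TInf"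
  shows "mult_aux k (TR True r) cs = sign_changes (initial_form r cs)"
  using assms
proof (induction k arbitrary: cs)
  case (Suc k)
  show ?case
  proof (cases "is_root cs (TR True r)")
    case False
    have "\<exists>c\<in>set cs. c \<noteq> TInf" using Suc.prems(2,3) last_in_set by metis
    then have "\<not> (1 \<in> set (initial_form r cs) \<and> -1 \<in> set (initial_form r cs))"
      using False is_root_iff_initial_form by blast
    moreover have "set (initial_form r cs) \<subseteq> {-1, 0, 1}"
      using level_sign_range by (auto simp: initial_form_eq_level_signs)
    ultimately show ?thesis using False by (simp add: sign_changes_without_both_signs)
  next
    case True
    define N where "N = sign_changes (initial_form r cs)"
    define Ds where "Ds = {ds. in_lin_mult cs (TR True r) ds}"
    have IH: "mult_aux k (TR True r) ds = sign_changes (initial_form r ds)" if "ds \<in> Ds" for ds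
      using that Suc.prems in_lin_mult_last[of cs "TR True r" ds]
      by (intro Suc.IH) (auto simp: Ds_def in_lin_mult_TR_True_iff)
    have upper: "sign_changes (initial_form r ds) \<le> N - 1" if "ds \<in> Ds" for ds
      using sign_changes_initial_form_quotient_le[of cs r ds] that Suc.prems(3)
      by (fastforce simp: Ds_def N_def)
    obtain ds0 where ds0: "ds0 \<in> Ds" "sign_changes (initial_form r ds0) + 1 = N"
      using exists_quotient_dropping_one_sign_change[OF Suc.prems(2,3) True]
      by (auto simp: Ds_def N_def)
    have bound: "mult_aux k (TR True r) ` Ds \<subseteq> {..N - 1}"
      using upper IH by (simp add: image_subset_iff)
    have "Max (mult_aux k (TR True r) ` Ds) = N - 1"
    proof (rule Max_eqI)
      show "finite (mult_aux k (TR True r) ` Ds)" using bound finite_subset by blast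
      show "y \<le> N - 1" if "y \<in> mult_aux k (TR True r) ` Ds" for y using that bound by auto
      show "N - 1 \<in> mult_aux k (TR True r) ` Ds"
        using ds0 IH by (intro image_eqI[of _ _ ds0]) auto
    qed
    then show ?thesis using True ds0(2) by (simp add: Ds_def N_def)
  qed
qed simp

theorem theoremA:
  fixes cs :: "tr list" and r :: real
  assumes "cs \<noteq> []"
    and "last cs \<noteq> TInf"
    and "is_root cs (TR True r)"
  shows "mult (TR True r) cs = sign_changes (initial_form r cs)"
  using mult_aux_eq_sign_changes[OF refl assms(1,2)] by (simp add: mult_def)

end
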